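(* Let $D=\mathrm{diag}(d_1,\dots,d_n)\in\mathbb{D}^n_+$, $W\in\mathbb{R}^{n\times n}$, $u\in\mathbb{R}^n$, $A:=W-D$, $\mathcal X=\{x\in\mathbb{R}^n: Dx\in[0,1]^n\}$. Assume $A$ is Lyapunov diagonally stable with diagonal certificate $\Lambda\in\mathbb{D}^n_+$ ($A^\top\Lambda+\Lambda A\prec0$), and let $V_\infty(x)=\max_{\zeta\in\{0,1\}^n}(Ax+u)^\top\Lambda(\zeta-Dx)$. Then the unique equilibrium $x^\star$ of the hard-selector inclusion $x'\in-Dx+\mathcal H(Ax+u)$ on $\mathcal X$ is strongly globally asymptotically stable. More precisely, with $d_{\min}:=\min_i d_i>0$, every absolutely continuous solution $x:[0,\infty)\to\mathcal X$ of the inclusion (satisfying it for a.e. $s$) obeys, for all $0\le s_1\le s_2$, $$V_\infty(x(s_2))\le e^{-d_{\min}(s_2-s_1)}V_\infty(x(s_1)).$$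
   Context: $\mathbb{D}^n_+$ is the set of positive diagonal matrices. $h(z)=\{0\}$ if $z<0$, $[0,1]$ if $z=0$, $\{1\}$ if $z>0$, and $\mathcal H(x)=h(x_1)\times\cdots\times h(x_n)$. "Strongly globally asymptotically stable" means that every solution from every initial condition in $\mathcal X$ converges to $x^\star$ and $x^\star$ is Lyapunov stable for all solutions (solutions of the inclusion need not be unique). *)

theory Defs
  imports "HOL-Analysis.Analysis"
begin

definition pos_diag :: "real^'n^'n \<Rightarrow> bool" where
  "pos_diag M \<longleftrightarrow> (\<forall>i j. i \<noteq> j \<longrightarrow> M$i$j = 0) \<and> (\<forall>i. M$i$i > 0)"

definition neg_def :: "real^'n^'n \<Rightarrow> bool" where
  "neg_def M \<longleftrightarrow> (\<forall>x. x \<noteq> 0 \<longrightarrow> x \<bullet> (M *v x) < 0)"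

definition lds_cert :: "real^'n^'n \<Rightarrow> real^'n^'n \<Rightarrow> bool" where
  "lds_cert A Lam \<longleftrightarrow> pos_diag Lam \<and> neg_def (transpose A ** Lam + Lam ** A)"

definition hsel :: "real \<Rightarrow> real set" where
  "hsel z = (if z < 0 then {0} else if z = 0 then {0..1} else {1})"

definition Hsel :: "real^'n \<Rightarrow> (real^'n) set" where
  "Hsel z = {v. \<forall>i. v$i \<in> hsel (z$i)}"

definition Xset :: "real^'n^'n \<Rightarrow> (real^'n) set" where
  "Xset D = {x. \<forall>i. (D *v x)$i \<in> {0..1}}"

definition Finc :: "real^'n^'n \<Rightarrow> real^'n^'n \<Rightarrow> real^'n \<Rightarrow> real^'n \<Rightarrow> (real^'n) set" where
  "Finc D A u x = {- (D *v x) + h | h. h \<in> Hsel (A *v x + u)}"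

definition abs_cont_on :: "real \<Rightarrow> real \<Rightarrow> (real \<Rightarrow> 'a::real_normed_vector) \<Rightarrow> bool" where
  "abs_cont_on S T f \<longleftrightarrow>
     (\<forall>\<epsilon>>0. \<exists>\<delta>>0. \<forall>(m::nat) (a::nat\<Rightarrow>real) (b::nat\<Rightarrow>real).
        (\<forall>k<m. S \<le> a k \<and> a k \<le> b k \<and> b k \<le> T) \<longrightarrow>
        (\<forall>j<m. \<forall>k<m. j \<noteq> k \<longrightarrow> b j \<le> a k \<or> b k \<le> a j) \<longrightarrow>
        (\<Sum>k<m. b k - a k) < \<delta> \<longrightarrow>
        (\<Sum>k<m. norm (f (b k) - f (a k))) < \<epsilon>)"

definition is_solution :: "real^'n^'n \<Rightarrow> real^'n^'n \<Rightarrow> real^'n \<Rightarrow> (real \<Rightarrow> real^'n) \<Rightarrow> bool" where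
  "is_solution D A u x \<longleftrightarrow>
     (\<forall>t\<ge>0. x t \<in> Xset D) \<and>
     (\<forall>T\<ge>0. abs_cont_on 0 T x) \<and>
     (AE s in lborel. 0 < s \<longrightarrow>
        (\<exists>v. (x has_vector_derivative v) (at s) \<and> v \<in> Finc D A u (x s)))"

definition is_equilibrium :: "real^'n^'n \<Rightarrow> real^'n^'n \<Rightarrow> real^'n \<Rightarrow> real^'n \<Rightarrow> bool" where
  "is_equilibrium D A u xs \<longleftrightarrow> xs \<in> Xset D \<and> 0 \<in> Finc D A u xs"

definition strongly_GAS :: "real^'n^'n \<Rightarrow> real^'n^'n \<Rightarrow> real^'n \<Rightarrow> real^'n \<Rightarrow> bool" where
  "strongly_GAS D A u xs \<longleftrightarrow>
     (\<forall>x. is_solution D A u x \<longrightarrow> (x \<longlongrightarrow> xs) at_top) \<and>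
     (\<forall>\<epsilon>>0. \<exists>\<delta>>0. \<forall>x. is_solution D A u x \<longrightarrow> norm (x 0 - xs) < \<delta> \<longrightarrow>
        (\<forall>t\<ge>0. norm (x t - xs) < \<epsilon>))"

definition V_inf :: "real^'n^'n \<Rightarrow> real^'n^'n \<Rightarrow> real^'n \<Rightarrow> real^'n^'n \<Rightarrow> real^'n \<Rightarrow> real" where
  "V_inf D A u Lam x =
     Max ((\<lambda>\<zeta>. (A *v x + u) \<bullet> (Lam *v (\<zeta> - D *v x))) ` {\<zeta>. \<forall>i. \<zeta>$i \<in> {0,1}})"

end

theory Submission
  imports Defs
begin

(* Write z = A x + u and y = D x, so that y_i lies in [0,1] on X.  Then V_inf (x) is the sum of the
   gaps Lam_ii (max z_i 0 - z_i y_i); each gap is nonnegative and vanishes exactly when y_i lies in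
   h (z_i), so on X the function V_inf vanishes exactly at the equilibria.  Along a solution with
   x' = v = - D x + eta, eta in H (z), the product z_i v_i is the i-th gap, and wherever the gaps
   are differentiable
     (V_inf o x)' = sum_i Lam_ii v_i (A v)_i - sum_i Lam_ii d_i z_i v_i <= - d_min V_inf (x),
   because the first sum is v' (A' Lam + Lam A) v / 2 <= 0.  The max in a gap fails to be
   differentiable only when z_i = 0 and (A v)_i <> 0; then z_i crosses 0 transversally, so such
   times are isolated, hence countable.  Since V_inf o x is absolutely continuous, the differential
   inequality, valid off a null set, integrates to the exponential bound (a Cousin-lemma argument
   shows that exp (d_min t) V_inf (x t) does not increase).  An equilibrium exists by Brouwer's
   theorem for a clamped map on the box X and is unique by the monotonicity of h and diagonal
   stability; strong global asymptotic stability follows from the uniform exponential decay of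
   V_inf, which is continuous on the compact set X and vanishes there only at the equilibrium. *)

section \<open>Absolutely continuous functions\<close>

definition nonoverlapping_intervals :: "real \<Rightarrow> real \<Rightarrow> nat \<Rightarrow> (nat \<Rightarrow> real) \<Rightarrow> (nat \<Rightarrow> real) \<Rightarrow> bool" where
  "nonoverlapping_intervals a b m \<alpha> \<beta> \<longleftrightarrow>
     (\<forall>k<m. a \<le> \<alpha> k \<and> \<alpha> k \<le> \<beta> k \<and> \<beta> k \<le> b) \<and>
     (\<forall>j<m. \<forall>k<m. j \<noteq> k \<longrightarrow> \<beta> j \<le> \<alpha> k \<or> \<beta> k \<le> \<alpha> j)"

lemma abs_cont_on_iff:
  "abs_cont_on a b f \<longleftrightarrow>
     (\<forall>e>0. \<exists>\<delta>>0. \<forall>m \<alpha> \<beta>. nonoverlapping_intervals a b m \<alpha> \<beta> \<longrightarrow>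
        (\<Sum>k<m. \<beta> k - \<alpha> k) < \<delta> \<longrightarrow> (\<Sum>k<m. norm (f (\<beta> k) - f (\<alpha> k))) < e)"
  unfolding abs_cont_on_def nonoverlapping_intervals_def by (simp add: imp_conjL)

lemma abs_cont_onE:
  assumes "abs_cont_on a b f" "e > 0"
  obtains \<delta> where "\<delta> > 0"
    "\<And>m \<alpha> \<beta>. nonoverlapping_intervals a b m \<alpha> \<beta> \<Longrightarrow> (\<Sum>k<m. \<beta> k - \<alpha> k) < \<delta> \<Longrightarrow>
       (\<Sum>k<m. norm (f (\<beta> k) - f (\<alpha> k))) < e"
  using assms unfolding abs_cont_on_iff by blast

lemma abs_cont_onI:
  assumes "\<And>e. e > 0 \<Longrightarrow> \<exists>\<delta>>0. \<forall>m \<alpha> \<beta>. nonoverlapping_intervals a b m \<alpha> \<beta> \<longrightarrow>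
        (\<Sum>k<m. \<beta> k - \<alpha> k) < \<delta> \<longrightarrow> (\<Sum>k<m. norm (f (\<beta> k) - f (\<alpha> k))) < e"
  shows "abs_cont_on a b f"
  using assms unfolding abs_cont_on_iff by blast

lemma abs_cont_on_imp_continuous_on:
  assumes "abs_cont_on a b f"
  shows "continuous_on {a..b} f"
  unfolding continuous_on_iff
proof (intro ballI allI impI)
  fix t e assume t: "t \<in> {a..b}" and "0 < (e::real)"
  obtain \<delta> where "\<delta> > 0" and \<delta>: "\<And>m \<alpha> \<beta>. nonoverlapping_intervals a b m \<alpha> \<beta> \<Longrightarrow>
      (\<Sum>k<m. \<beta> k - \<alpha> k) < \<delta> \<Longrightarrow> (\<Sum>k<m. norm (f (\<beta> k) - f (\<alpha> k))) < e"
    using abs_cont_onE[OF assms \<open>e > 0\<close>] by blast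
  show "\<exists>d>0. \<forall>s\<in>{a..b}. dist s t < d \<longrightarrow> dist (f s) (f t) < e"
  proof (intro exI[of _ \<delta>] conjI ballI impI \<open>\<delta> > 0\<close>)
    fix s assume s: "s \<in> {a..b}" "dist s t < \<delta>"
    have "norm (f (max s t) - f (min s t)) < e"
      using \<delta>[of 1 "\<lambda>_. min s t" "\<lambda>_. max s t"] s t
      by (auto simp: nonoverlapping_intervals_def dist_real_def)
    then show "dist (f s) (f t) < e"
      by (cases "s \<le> t") (auto simp: dist_norm norm_minus_commute)
  qed
qed

lemma abs_cont_on_subinterval:
  assumes "abs_cont_on a b f" "a \<le> c" "d \<le> b"
  shows "abs_cont_on c d f"
proof (rule abs_cont_onI)
  fix e :: real assume "e > 0"
  obtain \<delta> where "\<delta> > 0" and \<delta>: "\<And>m \<alpha> \<beta>. nonoverlapping_intervals a b m \<alpha> \<beta> \<Longrightarrow>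
      (\<Sum>k<m. \<beta> k - \<alpha> k) < \<delta> \<Longrightarrow> (\<Sum>k<m. norm (f (\<beta> k) - f (\<alpha> k))) < e"
    using abs_cont_onE[OF assms(1) \<open>e > 0\<close>] by blast
  have "nonoverlapping_intervals a b m \<alpha> \<beta>" if "nonoverlapping_intervals c d m \<alpha> \<beta>" for m \<alpha> \<beta>
    using that assms(2,3) unfolding nonoverlapping_intervals_def by force
  with \<delta> \<open>\<delta> > 0\<close> show "\<exists>\<delta>>0. \<forall>m \<alpha> \<beta>. nonoverlapping_intervals c d m \<alpha> \<beta> \<longrightarrow>
      (\<Sum>k<m. \<beta> k - \<alpha> k) < \<delta> \<longrightarrow> (\<Sum>k<m. norm (f (\<beta> k) - f (\<alpha> k))) < e"
    by blast
qed

lemma abs_cont_on_compose_lipschitz: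
  assumes f: "abs_cont_on a b f" and g: "L-lipschitz_on S g" and fS: "f ` {a..b} \<subseteq> S"
  shows "abs_cont_on a b (\<lambda>t. g (f t))"
proof (rule abs_cont_onI)
  fix e :: real assume "e > 0"
  have L: "0 \<le> L" using lipschitz_on_nonneg[OF g] .
  with \<open>e > 0\<close> have "e / (L + 1) > 0" by simp
  then obtain \<delta> where "\<delta> > 0" and \<delta>: "\<And>m \<alpha> \<beta>. nonoverlapping_intervals a b m \<alpha> \<beta> \<Longrightarrow>
      (\<Sum>k<m. \<beta> k - \<alpha> k) < \<delta> \<Longrightarrow> (\<Sum>k<m. norm (f (\<beta> k) - f (\<alpha> k))) < e / (L + 1)"
    using abs_cont_onE[OF f] by blast
  show "\<exists>\<delta>>0. \<forall>m \<alpha> \<beta>. nonoverlapping_intervals a b m \<alpha> \<beta> \<longrightarrow>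
      (\<Sum>k<m. \<beta> k - \<alpha> k) < \<delta> \<longrightarrow> (\<Sum>k<m. norm (g (f (\<beta> k)) - g (f (\<alpha> k)))) < e"
  proof (intro exI[of _ \<delta>] conjI allI impI \<open>\<delta> > 0\<close>)
    fix m \<alpha> \<beta> assume intervals: "nonoverlapping_intervals a b m \<alpha> \<beta>"
      and short: "(\<Sum>k<m. \<beta> k - \<alpha> k) < \<delta>"
    have "(\<Sum>k<m. norm (g (f (\<beta> k)) - g (f (\<alpha> k)))) \<le> (\<Sum>k<m. L * norm (f (\<beta> k) - f (\<alpha> k)))"
      using intervals fS unfolding nonoverlapping_intervals_def
      by (intro sum_mono lipschitz_on_normD[OF g]) (auto simp: image_subset_iff)
    also have "\<dots> = L * (\<Sum>k<m. norm (f (\<beta> k) - f (\<alpha> k)))"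
      by (simp add: sum_distrib_left)
    also have "\<dots> \<le> L * (e / (L + 1))"
      using \<delta>[OF intervals short] L by (intro mult_left_mono) auto
    also have "\<dots> < e"
      using L \<open>e > 0\<close> by (simp add: field_simps)
    finally show "(\<Sum>k<m. norm (g (f (\<beta> k)) - g (f (\<alpha> k)))) < e" .
  qed
qed

lemma lipschitz_on_imp_abs_cont_on:
  assumes "L-lipschitz_on {a..b} f"
  shows "abs_cont_on a b f"
proof -
  have "abs_cont_on a b (\<lambda>t. t)"
  proof (rule abs_cont_onI)
    fix e :: real assume "e > 0"
    have "(\<Sum>k<m. norm (\<beta> k - \<alpha> k)) = (\<Sum>k<m. \<beta> k - \<alpha> k)"
      if "nonoverlapping_intervals a b m \<alpha> \<beta>" for m \<alpha> \<beta>
      using that unfolding nonoverlapping_intervals_def by (intro sum.cong) auto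
    with \<open>e > 0\<close> show "\<exists>\<delta>>0. \<forall>m \<alpha> \<beta>. nonoverlapping_intervals a b m \<alpha> \<beta> \<longrightarrow>
        (\<Sum>k<m. \<beta> k - \<alpha> k) < \<delta> \<longrightarrow> (\<Sum>k<m. norm (\<beta> k - \<alpha> k)) < e"
      by (intro exI[of _ e]) auto
  qed
  then show ?thesis
    using abs_cont_on_compose_lipschitz[OF _ assms] by simp
qed

lemma abs_cont_on_mult:
  fixes f g :: "real \<Rightarrow> 'a::real_normed_algebra"
  assumes f: "abs_cont_on a b f" and g: "abs_cont_on a b g"
  shows "abs_cont_on a b (\<lambda>t. f t * g t)"
proof (rule abs_cont_onI)
  fix e :: real assume "e > 0"
  have "bounded ((\<lambda>t. f t) ` {a..b} \<union> g ` {a..b})"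
    using f g by (intro compact_imp_bounded compact_Un compact_continuous_image
        abs_cont_on_imp_continuous_on) auto
  then obtain B where "B > 0" and B: "\<And>t. t \<in> {a..b} \<Longrightarrow> norm (f t) \<le> B \<and> norm (g t) \<le> B"
    unfolding bounded_pos by blast
  with \<open>e > 0\<close> have "e / (2 * B) > 0" by simp
  obtain \<delta>f where "\<delta>f > 0" and \<delta>f: "\<And>m \<alpha> \<beta>. nonoverlapping_intervals a b m \<alpha> \<beta> \<Longrightarrow>
      (\<Sum>k<m. \<beta> k - \<alpha> k) < \<delta>f \<Longrightarrow> (\<Sum>k<m. norm (f (\<beta> k) - f (\<alpha> k))) < e / (2 * B)"
    using abs_cont_onE[OF f \<open>e / (2 * B) > 0\<close>] by blast
  obtain \<delta>g where "\<delta>g > 0" and \<delta>g: "\<And>m \<alpha> \<beta>. nonoverlapping_intervals a b m \<alpha> \<beta> \<Longrightarrow>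
      (\<Sum>k<m. \<beta> k - \<alpha> k) < \<delta>g \<Longrightarrow> (\<Sum>k<m. norm (g (\<beta> k) - g (\<alpha> k))) < e / (2 * B)"
    using abs_cont_onE[OF g \<open>e / (2 * B) > 0\<close>] by blast
  show "\<exists>\<delta>>0. \<forall>m \<alpha> \<beta>. nonoverlapping_intervals a b m \<alpha> \<beta> \<longrightarrow>
      (\<Sum>k<m. \<beta> k - \<alpha> k) < \<delta> \<longrightarrow> (\<Sum>k<m. norm (f (\<beta> k) * g (\<beta> k) - f (\<alpha> k) * g (\<alpha> k))) < e"
  proof (intro exI[of _ "min \<delta>f \<delta>g"] conjI allI impI)
    fix m \<alpha> \<beta> assume intervals: "nonoverlapping_intervals a b m \<alpha> \<beta>"
      and short: "(\<Sum>k<m. \<beta> k - \<alpha> k) < min \<delta>f \<delta>g"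
    have "norm (f (\<beta> k) * g (\<beta> k) - f (\<alpha> k) * g (\<alpha> k))
        \<le> B * norm (g (\<beta> k) - g (\<alpha> k)) + B * norm (f (\<beta> k) - f (\<alpha> k))" if "k < m" for k
    proof -
      have ab: "\<alpha> k \<in> {a..b}" "\<beta> k \<in> {a..b}"
        using intervals that unfolding nonoverlapping_intervals_def by auto
      have "f (\<beta> k) * g (\<beta> k) - f (\<alpha> k) * g (\<alpha> k)
          = f (\<beta> k) * (g (\<beta> k) - g (\<alpha> k)) + (f (\<beta> k) - f (\<alpha> k)) * g (\<alpha> k)"
        by (simp add: algebra_simps)
      also have "norm \<dots> \<le> norm (f (\<beta> k)) * norm (g (\<beta> k) - g (\<alpha> k))
          + norm (f (\<beta> k) - f (\<alpha> k)) * norm (g (\<alpha> k))"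
        by (intro norm_triangle_le add_mono norm_mult_ineq)
      also have "\<dots> \<le> B * norm (g (\<beta> k) - g (\<alpha> k)) + norm (f (\<beta> k) - f (\<alpha> k)) * B"
        using B[OF ab(1)] B[OF ab(2)] \<open>B > 0\<close> by (intro add_mono mult_mono) auto
      finally show ?thesis by (simp add: mult.commute)
    qed
    then have "(\<Sum>k<m. norm (f (\<beta> k) * g (\<beta> k) - f (\<alpha> k) * g (\<alpha> k)))
        \<le> (\<Sum>k<m. B * norm (g (\<beta> k) - g (\<alpha> k)) + B * norm (f (\<beta> k) - f (\<alpha> k)))"
      by (intro sum_mono) simp
    also have "\<dots> = B * (\<Sum>k<m. norm (g (\<beta> k) - g (\<alpha> k))) + B * (\<Sum>k<m. norm (f (\<beta> k) - f (\<alpha> k)))"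
      by (simp add: sum.distrib sum_distrib_left)
    also have "\<dots> < B * (e / (2 * B)) + B * (e / (2 * B))"
      using \<delta>f[OF intervals] \<delta>g[OF intervals] short \<open>B > 0\<close>
      by (intro add_strict_mono mult_strict_left_mono) auto
    also have "\<dots> = e"
      using \<open>B > 0\<close> by simp
    finally show "(\<Sum>k<m. norm (f (\<beta> k) * g (\<beta> k) - f (\<alpha> k) * g (\<alpha> k))) < e" .
  qed (use \<open>\<delta>f > 0\<close> \<open>\<delta>g > 0\<close> in simp)
qed

section \<open>Monotonicity from an almost everywhere derivative bound\<close>

lemma tagged_division_of_real_interval:
  fixes a b :: real
  assumes "p tagged_division_of {a..b}" "(t, K) \<in> p"
  obtains c d where "K = {c..d}" "c \<le> t" "t \<le> d" "a \<le> c" "d \<le> b"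
proof -
  obtain c d where "K = cbox c d"
    using tagged_division_ofD(4)[OF assms] by blast
  then have "K = {c..d}" by simp
  moreover have "t \<in> K" "K \<subseteq> {a..b}"
    using tagged_division_ofD(2,3)[OF assms] by auto
  ultimately show ?thesis
    using that by auto
qed

lemma tagged_division_nondegenerate_nonoverlapping:
  fixes a b :: real
  assumes p: "p tagged_division_of {a..b}" and "Q \<subseteq> p"
    and nondegenerate: "\<And>t K. (t, K) \<in> Q \<Longrightarrow> measure lborel K \<noteq> 0"
  shows "\<exists>m \<alpha> \<beta>. nonoverlapping_intervals a b m \<alpha> \<beta> \<and>
    (\<forall>F :: real \<Rightarrow> real \<Rightarrow> real. (\<Sum>k<m. F (\<alpha> k) (\<beta> k)) = (\<Sum>(t,K)\<in>Q. F (Inf K) (Sup K)))"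
proof -
  have "finite Q"
    using tagged_division_of_finite[OF p] \<open>Q \<subseteq> p\<close> by (rule rev_finite_subset)
  then obtain h where h: "bij_betw h {..<card Q} Q"
    using ex_bij_betw_nat_finite by (auto simp: lessThan_atLeast0)
  define m where "m = card Q"
  define \<alpha> where "\<alpha> k = Inf (snd (h k))" for k
  define \<beta> where "\<beta> k = Sup (snd (h k))" for k
  have hQ: "h k \<in> Q" if "k < m" for k
    using h that unfolding m_def bij_betw_def by auto
  have interval: "snd (h k) = {\<alpha> k..\<beta> k} \<and> \<alpha> k < \<beta> k \<and> a \<le> \<alpha> k \<and> \<beta> k \<le> b" if "k < m" for k
  proof -
    obtain t K where tK: "h k = (t, K)" by fastforce
    with hQ[OF that] \<open>Q \<subseteq> p\<close> nondegenerate have "(t, K) \<in> p" "measure lborel K \<noteq> 0" by auto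
    then show ?thesis
      using tK by (elim tagged_division_of_real_interval[OF p]) (auto simp: \<alpha>_def \<beta>_def)
  qed
  have "nonoverlapping_intervals a b m \<alpha> \<beta>"
    unfolding nonoverlapping_intervals_def
  proof (intro conjI allI impI)
    fix j k assume jk: "j < m" "k < m" "j \<noteq> k"
    then have "h j \<noteq> h k"
      using h unfolding bij_betw_def inj_on_def m_def by auto
    moreover have "h j \<in> p" "h k \<in> p"
      using hQ jk \<open>Q \<subseteq> p\<close> by auto
    ultimately have "interior (snd (h j)) \<inter> interior (snd (h k)) = {}"
      using tagged_division_ofD(5)[OF p] by (metis prod.collapse)
    then have disjoint: "{\<alpha> j<..<\<beta> j} \<inter> {\<alpha> k<..<\<beta> k} = {}"
      using interval[OF jk(1)] interval[OF jk(2)] by simp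
    show "\<beta> j \<le> \<alpha> k \<or> \<beta> k \<le> \<alpha> j"
    proof (rule ccontr)
      assume "\<not> (\<beta> j \<le> \<alpha> k \<or> \<beta> k \<le> \<alpha> j)"
      then have "(max (\<alpha> j) (\<alpha> k) + min (\<beta> j) (\<beta> k)) / 2 \<in> {\<alpha> j<..<\<beta> j} \<inter> {\<alpha> k<..<\<beta> k}"
        using interval[OF jk(1)] interval[OF jk(2)] by auto
      with disjoint show False by blast
    qed
  qed (use interval in \<open>auto intro: less_imp_le\<close>)
  moreover have "(\<Sum>k<m. F (\<alpha> k) (\<beta> k)) = (\<Sum>(t,K)\<in>Q. F (Inf K) (Sup K))" for F :: "real \<Rightarrow> real \<Rightarrow> real"
    using sum.reindex_bij_betw[OF h, of "\<lambda>(t,K). F (Inf K) (Sup K)"]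
    by (simp add: m_def \<alpha>_def \<beta>_def case_prod_unfold)
  ultimately show ?thesis
    by blast
qed

lemma abs_cont_on_tagged_division_sum:
  fixes f :: "real \<Rightarrow> 'a::real_normed_vector"
  assumes "abs_cont_on a b f" "e > 0"
  obtains \<delta> where "\<delta> > 0"
    "\<And>p Q. p tagged_division_of {a..b} \<Longrightarrow> Q \<subseteq> p \<Longrightarrow> (\<Sum>(t,K)\<in>Q. measure lborel K) < \<delta> \<Longrightarrow>
       (\<Sum>(t,K)\<in>Q. norm (f (Sup K) - f (Inf K))) < e"
proof -
  obtain \<delta> where "\<delta> > 0" and \<delta>: "\<And>m \<alpha> \<beta>. nonoverlapping_intervals a b m \<alpha> \<beta> \<Longrightarrow>
      (\<Sum>k<m. \<beta> k - \<alpha> k) < \<delta> \<Longrightarrow> (\<Sum>k<m. norm (f (\<beta> k) - f (\<alpha> k))) < e"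
    using abs_cont_onE[OF assms] by blast
  have "(\<Sum>(t,K)\<in>Q. norm (f (Sup K) - f (Inf K))) < e"
    if p: "p tagged_division_of {a..b}" and "Q \<subseteq> p" and small: "(\<Sum>(t,K)\<in>Q. measure lborel K) < \<delta>" for p Q
  proof -
    define Q' where "Q' = {(t,K) \<in> Q. measure lborel K \<noteq> 0}"
    have "finite Q"
      using tagged_division_of_finite[OF p] \<open>Q \<subseteq> p\<close> by (rule rev_finite_subset)
    have length: "Sup K - Inf K = measure lborel K" if "(t, K) \<in> Q" for t K
    proof -
      have "(t, K) \<in> p"
        using that \<open>Q \<subseteq> p\<close> by blast
      then obtain c d where "K = {c..d}" "c \<le> t" "t \<le> d"
        using tagged_division_of_real_interval[OF p] by blast
      then show ?thesis by simp
    qed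
    have "Q' \<subseteq> p" "\<And>t K. (t, K) \<in> Q' \<Longrightarrow> measure lborel K \<noteq> 0"
      using \<open>Q \<subseteq> p\<close> by (auto simp: Q'_def)
    then obtain m \<alpha> \<beta> where intervals: "nonoverlapping_intervals a b m \<alpha> \<beta>"
      and sums: "\<And>F :: real \<Rightarrow> real \<Rightarrow> real. (\<Sum>k<m. F (\<alpha> k) (\<beta> k)) = (\<Sum>(t,K)\<in>Q'. F (Inf K) (Sup K))"
      using tagged_division_nondegenerate_nonoverlapping[OF p] by blast
    have "(\<Sum>k<m. \<beta> k - \<alpha> k) = (\<Sum>(t,K)\<in>Q'. measure lborel K)"
      using sums[of "\<lambda>c d. d - c"] length by (auto simp: Q'_def intro!: sum.cong)
    also have "\<dots> = (\<Sum>(t,K)\<in>Q. measure lborel K)"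
      unfolding Q'_def by (rule sum.mono_neutral_left[OF \<open>finite Q\<close>]) auto
    finally have "(\<Sum>k<m. norm (f (\<beta> k) - f (\<alpha> k))) < e"
      using \<delta>[OF intervals] small by simp
    moreover have "(\<Sum>(t,K)\<in>Q'. norm (f (Sup K) - f (Inf K))) = (\<Sum>(t,K)\<in>Q. norm (f (Sup K) - f (Inf K)))"
      unfolding Q'_def by (intro sum.mono_neutral_left[OF \<open>finite Q\<close>]) (auto dest: length)
    ultimately show ?thesis
      using sums[of "\<lambda>c d. norm (f d - f c)"] by simp
  qed
  with \<open>\<delta> > 0\<close> show thesis using that by blast
qed

lemma has_real_derivative_nonpos_straddle:
  fixes g :: "real \<Rightarrow> real"
  assumes "(g has_real_derivative g') (at t)" "g' \<le> 0" "\<epsilon> > 0"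
  shows "\<exists>r>0. \<forall>u v. u \<le> t \<longrightarrow> t \<le> v \<longrightarrow> t - u < r \<longrightarrow> v - t < r \<longrightarrow>
    g v - g u \<le> \<epsilon> * (v - u)"
proof -
  from assms(1) have "(g has_derivative (\<lambda>h. h * g')) (at t)"
    by (simp add: has_field_derivative_def mult.commute[of _ g'])
  then obtain r where "r > 0"
    and r: "\<And>y. norm (y - t) < r \<Longrightarrow> norm (g y - g t - (y - t) * g') \<le> \<epsilon> * norm (y - t)"
    unfolding has_derivative_at_alt using \<open>\<epsilon> > 0\<close> by metis
  show ?thesis
  proof (intro exI[of _ r] conjI allI impI \<open>r > 0\<close>)
    fix u v assume uv: "u \<le> t" "t \<le> v" "t - u < r" "v - t < r"
    have "g v - g t \<le> (v - t) * g' + \<epsilon> * (v - t)"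
      using r[of v] uv by (simp add: abs_le_iff)
    moreover have "g t - g u \<le> (t - u) * g' + \<epsilon> * (t - u)"
    proof -
      have "\<bar>g u - g t - (u - t) * g'\<bar> \<le> \<epsilon> * (t - u)"
        using r[of u] uv by simp
      moreover have "(u - t) * g' = - ((t - u) * g')"
        by (simp add: algebra_simps)
      ultimately show ?thesis
        unfolding abs_le_iff by linarith
    qed
    moreover have "(v - t) * g' \<le> 0" "(t - u) * g' \<le> 0"
      using uv assms(2) by (simp_all add: mult_nonneg_nonpos)
    ultimately show "g v - g u \<le> \<epsilon> * (v - u)"
      by (simp add: algebra_simps)
  qed
qed

lemma deriv_nonpos_gauge:
  fixes g :: "real \<Rightarrow> real"
  assumes "\<And>t. t \<in> S \<Longrightarrow> \<exists>g'. (g has_real_derivative g') (at t) \<and> g' \<le> 0" "\<epsilon> > 0"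
  obtains \<gamma> where "gauge \<gamma>"
    "\<And>t c d. t \<in> S \<Longrightarrow> c \<le> t \<Longrightarrow> t \<le> d \<Longrightarrow> {c..d} \<subseteq> \<gamma> t \<Longrightarrow> g d - g c \<le> \<epsilon> * (d - c)"
proof -
  have "\<forall>t\<in>S. \<exists>r>0. \<forall>u v. u \<le> t \<longrightarrow> t \<le> v \<longrightarrow> t - u < r \<longrightarrow> v - t < r \<longrightarrow>
      g v - g u \<le> \<epsilon> * (v - u)"
  proof
    fix t assume "t \<in> S"
    then obtain g' where "(g has_real_derivative g') (at t)" "g' \<le> 0"
      using assms(1) by blast
    then show "\<exists>r>0. \<forall>u v. u \<le> t \<longrightarrow> t \<le> v \<longrightarrow> t - u < r \<longrightarrow> v - t < r \<longrightarrow>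
        g v - g u \<le> \<epsilon> * (v - u)"
      using \<open>\<epsilon> > 0\<close> by (rule has_real_derivative_nonpos_straddle)
  qed
  then obtain r where r: "\<forall>t\<in>S. r t > 0 \<and> (\<forall>u v. u \<le> t \<longrightarrow> t \<le> v \<longrightarrow>
      t - u < r t \<longrightarrow> v - t < r t \<longrightarrow> g v - g u \<le> \<epsilon> * (v - u))"
    by (rule exE[OF bchoice])
  define \<rho> where "\<rho> t = (if t \<in> S then r t else 1)" for t
  show thesis
  proof (rule that)
    show "gauge (\<lambda>t. ball t (\<rho> t))"
      using r by (intro gauge_ball_dependent) (simp add: \<rho>_def)
    fix t c d assume "t \<in> S" "c \<le> t" "t \<le> d" and sub: "{c..d} \<subseteq> ball t (\<rho> t)"
    then have "t - c < r t" "d - t < r t"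
      using subsetD[OF sub, of c] subsetD[OF sub, of d] by (auto simp: \<rho>_def dist_real_def)
    moreover have "\<forall>u v. u \<le> t \<longrightarrow> t \<le> v \<longrightarrow> t - u < r t \<longrightarrow> v - t < r t \<longrightarrow>
        g v - g u \<le> \<epsilon> * (v - u)"
      using r \<open>t \<in> S\<close> by blast
    ultimately show "g d - g c \<le> \<epsilon> * (d - c)"
      using \<open>c \<le> t\<close> \<open>t \<le> d\<close> by blast
  qed
qed

lemma tagged_division_increments_le:
  fixes g :: "real \<Rightarrow> real"
  assumes p: "p tagged_division_of {a..b}" and "a \<le> b" "\<gamma> fine p" "\<epsilon> \<ge> 0"
    and incr: "\<And>t c d. t \<in> S \<Longrightarrow> c \<le> t \<Longrightarrow> t \<le> d \<Longrightarrow> {c..d} \<subseteq> \<gamma> t \<Longrightarrow> g d - g c \<le> \<epsilon> * (d - c)"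
  shows "(\<Sum>(t,K)\<in>p \<inter> {x. fst x \<in> S}. g (Sup K) - g (Inf K)) \<le> \<epsilon> * (b - a)"
proof -
  have "finite p"
    using p by (rule tagged_division_of_finite)
  have "(\<Sum>(t,K)\<in>p \<inter> {x. fst x \<in> S}. g (Sup K) - g (Inf K))
      \<le> (\<Sum>(t,K)\<in>p \<inter> {x. fst x \<in> S}. \<epsilon> * measure lborel K)"
  proof (rule sum_mono, clarify)
    fix t K assume "(t, K) \<in> p" "fst (t, K) \<in> S"
    moreover obtain c d where "K = {c..d}" "c \<le> t" "t \<le> d"
      using tagged_division_of_real_interval[OF p \<open>(t, K) \<in> p\<close>] by blast
    moreover have "K \<subseteq> \<gamma> t"
      using \<open>\<gamma> fine p\<close> \<open>(t, K) \<in> p\<close> by (auto simp: fine_def)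
    ultimately show "g (Sup K) - g (Inf K) \<le> \<epsilon> * measure lborel K"
      using incr[of t c d] by simp
  qed
  also have "\<dots> \<le> (\<Sum>(t,K)\<in>p. \<epsilon> * measure lborel K)"
    using \<open>\<epsilon> \<ge> 0\<close> by (intro sum_mono2 \<open>finite p\<close>) auto
  also have "\<dots> = \<epsilon> * (b - a)"
    using additive_content_tagged_division[of p a b] p \<open>a \<le> b\<close>
    by (simp add: sum_distrib_left[symmetric] case_prod_unfold)
  finally show ?thesis .
qed

lemma abs_cont_on_negligible_tags:
  fixes g :: "real \<Rightarrow> real"
  assumes "abs_cont_on a b g" "negligible E" "\<epsilon> > 0"
  obtains \<gamma> where "gauge \<gamma>" "\<And>p. p tagged_division_of {a..b} \<Longrightarrow> \<gamma> fine p \<Longrightarrow>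
    (\<Sum>(t,K)\<in>p \<inter> {x. fst x \<in> E}. g (Sup K) - g (Inf K)) < \<epsilon>"
proof -
  obtain \<delta> where "\<delta> > 0" and \<delta>: "\<And>p Q. p tagged_division_of {a..b} \<Longrightarrow> Q \<subseteq> p \<Longrightarrow>
      (\<Sum>(t,K)\<in>Q. measure lborel K) < \<delta> \<Longrightarrow> (\<Sum>(t,K)\<in>Q. norm (g (Sup K) - g (Inf K))) < \<epsilon>"
    using abs_cont_on_tagged_division_sum[OF assms(1,3)] by blast
  have "((indicator E :: real \<Rightarrow> real) has_integral 0) {a..b}"
    using \<open>negligible E\<close> unfolding negligible_def by (metis box_real(2))
  then obtain \<gamma> where "gauge \<gamma>" and \<gamma>: "\<And>p. p tagged_division_of {a..b} \<Longrightarrow> \<gamma> fine p \<Longrightarrow>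
      norm ((\<Sum>(t,K)\<in>p. measure lborel K *\<^sub>R (indicator E t :: real)) - 0) < \<delta>"
    unfolding has_integral_real using \<open>\<delta> > 0\<close> by meson
  show thesis
  proof (rule that[OF \<open>gauge \<gamma>\<close>])
    fix p assume p: "p tagged_division_of {a..b}" and "\<gamma> fine p"
    let ?T = "p \<inter> {x. fst x \<in> E}"
    have "finite p"
      using p by (rule tagged_division_of_finite)
    have "(\<Sum>(t,K)\<in>?T. measure lborel K) = (\<Sum>(t,K)\<in>?T. measure lborel K * indicator E t)"
      by (intro sum.cong) auto
    also have "\<dots> \<le> (\<Sum>(t,K)\<in>p. measure lborel K * indicator E t)"
      by (intro sum_mono2 \<open>finite p\<close>) auto
    also have "\<dots> < \<delta>"
      using \<gamma>[OF p \<open>\<gamma> fine p\<close>] by (simp add: case_prod_unfold)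
    finally have "(\<Sum>(t,K)\<in>?T. norm (g (Sup K) - g (Inf K))) < \<epsilon>"
      using \<delta>[OF p] by blast
    moreover have "(\<Sum>(t,K)\<in>?T. g (Sup K) - g (Inf K)) \<le> (\<Sum>(t,K)\<in>?T. norm (g (Sup K) - g (Inf K)))"
      by (intro sum_mono) (auto simp: case_prod_unfold)
    ultimately show "(\<Sum>(t,K)\<in>?T. g (Sup K) - g (Inf K)) < \<epsilon>"
      by linarith
  qed
qed

lemma abs_cont_on_deriv_nonpos_imp_le:
  fixes g :: "real \<Rightarrow> real"
  assumes "a \<le> b" "abs_cont_on a b g" "negligible E"
    and deriv: "\<And>t. t \<in> {a..b} - E \<Longrightarrow> \<exists>g'. (g has_real_derivative g') (at t) \<and> g' \<le> 0"
  shows "g b \<le> g a"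
  \<comment> \<open>Cousin's lemma: on a fine tagged division, intervals tagged outside \<open>E\<close> are controlled by the
    derivative, and those tagged in \<open>E\<close> have small total length, so absolute continuity controls them.\<close>
proof (rule field_le_epsilon)
  fix e :: real assume "e > 0"
  define \<epsilon> where "\<epsilon> = e / (b - a + 1)"
  have "\<epsilon> > 0" "\<epsilon> * (b - a + 1) = e"
    using \<open>e > 0\<close> \<open>a \<le> b\<close> by (simp_all add: \<epsilon>_def)
  obtain \<gamma>E where "gauge \<gamma>E" and \<gamma>E: "\<And>p. p tagged_division_of {a..b} \<Longrightarrow> \<gamma>E fine p \<Longrightarrow>
      (\<Sum>(t,K)\<in>p \<inter> {x. fst x \<in> E}. g (Sup K) - g (Inf K)) < \<epsilon>"
    using abs_cont_on_negligible_tags[OF assms(2,3) \<open>\<epsilon> > 0\<close>] by blast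
  obtain \<gamma>D where "gauge \<gamma>D" and \<gamma>D: "\<And>t c d. t \<in> {a..b} - E \<Longrightarrow> c \<le> t \<Longrightarrow> t \<le> d \<Longrightarrow>
      {c..d} \<subseteq> \<gamma>D t \<Longrightarrow> g d - g c \<le> \<epsilon> * (d - c)"
    using deriv_nonpos_gauge[OF deriv \<open>\<epsilon> > 0\<close>] by blast
  obtain p where p: "p tagged_division_of {a..b}" and "(\<lambda>t. \<gamma>E t \<inter> \<gamma>D t) fine p"
    using fine_division_exists[OF gauge_Int[OF \<open>gauge \<gamma>E\<close> \<open>gauge \<gamma>D\<close>], of a b] by (metis box_real(2))
  then have "\<gamma>E fine p" "\<gamma>D fine p"
    by (auto simp: fine_Int)
  have "p - {x. fst x \<in> E} = p \<inter> {x. fst x \<in> {a..b} - E}"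
    using tagged_division_ofD(2,3)[OF p] by fastforce
  then have "(\<Sum>(t,K)\<in>p - {x. fst x \<in> E}. g (Sup K) - g (Inf K)) \<le> \<epsilon> * (b - a)"
    using tagged_division_increments_le[where S="{a..b} - E", OF p \<open>a \<le> b\<close> \<open>\<gamma>D fine p\<close> _ \<gamma>D]
      \<open>\<epsilon> > 0\<close> by simp
  moreover have "g b - g a = (\<Sum>(t,K)\<in>p \<inter> {x. fst x \<in> E}. g (Sup K) - g (Inf K))
      + (\<Sum>(t,K)\<in>p - {x. fst x \<in> E}. g (Sup K) - g (Inf K))"
    using additive_tagged_division_1[OF \<open>a \<le> b\<close> p, of g] tagged_division_of_finite[OF p]
    by (simp add: sum.Int_Diff[symmetric])
  ultimately show "g b \<le> g a + e"
    using \<gamma>E[OF p \<open>\<gamma>E fine p\<close>] \<open>\<epsilon> * (b - a + 1) = e\<close> by (simp add: distrib_left)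
qed

lemma lipschitz_on_exp_scaled:
  fixes a b c :: real
  shows "(\<bar>c\<bar> * (exp (c * a) + exp (c * b)))-lipschitz_on {a..b} (\<lambda>t. exp (c * t))"
proof (rule lipschitz_onI)
  fix x y assume "x \<in> {a..b}" "y \<in> {a..b}"
  have "norm (exp (c * x) - exp (c * y)) \<le> \<bar>c\<bar> * (exp (c * a) + exp (c * b)) * norm (x - y)"
  proof (rule field_differentiable_bound[OF convex_real_interval(5) _ _ \<open>x \<in> {a..b}\<close> \<open>y \<in> {a..b}\<close>])
    fix z assume z: "z \<in> {a..b}"
    show "((\<lambda>t. exp (c * t)) has_field_derivative c * exp (c * z)) (at z within {a..b})"
      by (auto intro!: derivative_eq_intros)
    have "exp (c * z) \<le> exp (c * a) + exp (c * b)"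
    proof (cases "c \<ge> 0")
      case True
      then have "c * z \<le> c * b" using z by (simp add: mult_left_mono)
      then have "exp (c * z) \<le> exp (c * b)" by simp
      then show ?thesis using exp_gt_zero[of "c * a"] by linarith
    next
      case False
      then have "c * z \<le> c * a" using z by (simp add: mult_left_mono_neg)
      then have "exp (c * z) \<le> exp (c * a)" by simp
      then show ?thesis using exp_gt_zero[of "c * b"] by linarith
    qed
    then show "norm (c * exp (c * z)) \<le> \<bar>c\<bar> * (exp (c * a) + exp (c * b))"
      by (simp add: abs_mult mult_left_mono)
  qed
  then show "dist (exp (c * x)) (exp (c * y)) \<le> \<bar>c\<bar> * (exp (c * a) + exp (c * b)) * dist x y"
    by (simp add: dist_norm)
qed simp

lemma abs_cont_on_exp_decay:
  fixes V :: "real \<Rightarrow> real"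
  assumes "a \<le> b" "abs_cont_on a b V" "negligible E"
    and deriv: "\<And>t. t \<in> {a..b} - E \<Longrightarrow> \<exists>V'. (V has_real_derivative V') (at t) \<and> V' \<le> - c * V t"
  shows "V b \<le> exp (- c * (b - a)) * V a"
proof -
  have "abs_cont_on a b (\<lambda>t. exp (c * t) * V t)"
    by (rule abs_cont_on_mult[OF lipschitz_on_imp_abs_cont_on[OF lipschitz_on_exp_scaled] assms(2)])
  then have "exp (c * b) * V b \<le> exp (c * a) * V a"
  proof (rule abs_cont_on_deriv_nonpos_imp_le[OF \<open>a \<le> b\<close> _ \<open>negligible E\<close>])
    fix t assume "t \<in> {a..b} - E"
    then obtain V' where V': "(V has_real_derivative V') (at t)" "V' \<le> - c * V t"
      using deriv by blast
    have "((\<lambda>t. exp (c * t)) has_real_derivative exp (c * t) * c) (at t)"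
      by (auto intro!: derivative_eq_intros)
    from DERIV_mult[OF this V'(1)]
    have "((\<lambda>t. exp (c * t) * V t) has_real_derivative exp (c * t) * (c * V t + V')) (at t)"
      by (simp add: algebra_simps)
    moreover have "exp (c * t) * (c * V t + V') \<le> 0"
      using V'(2) by (simp add: mult_nonneg_nonpos)
    ultimately show "\<exists>g'. ((\<lambda>t. exp (c * t) * V t) has_real_derivative g') (at t) \<and> g' \<le> 0"
      by blast
  qed
  then have "exp (- c * b) * (exp (c * b) * V b) \<le> exp (- c * b) * (exp (c * a) * V a)"
    by (simp add: mult_left_mono)
  moreover have "exp (- c * b) * (exp (c * b) * V b) = V b"
    by (simp add: mult.assoc[symmetric] exp_add[symmetric])
  moreover have "exp (- c * b) * (exp (c * a) * V a) = exp (- c * (b - a)) * V a"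
    by (simp add: mult.assoc[symmetric] exp_add[symmetric] right_diff_distrib)
  ultimately show ?thesis
    by linarith
qed

section \<open>The hard selector and the equilibria\<close>

text \<open>\<open>selector_gap z y\<close> is the maximum of \<open>z * (\<zeta> - y)\<close> over \<open>\<zeta> \<in> {0, 1}\<close>, so \<open>V_inf\<close> is a weighted
  sum of such gaps.\<close>

definition selector_gap :: "real \<Rightarrow> real \<Rightarrow> real" where
  "selector_gap z y = max z 0 - z * y"

lemma hsel_bounds: "h \<in> hsel z \<Longrightarrow> 0 \<le> h \<and> h \<le> 1"
  by (simp add: hsel_def split: if_splits)

lemma hsel_mult: "h \<in> hsel z \<Longrightarrow> z * h = max z 0"
  by (simp add: hsel_def split: if_splits)

lemma selector_gap_eq: "h \<in> hsel z \<Longrightarrow> selector_gap z y = z * (h - y)"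
  by (simp add: selector_gap_def right_diff_distrib hsel_mult)

lemma selector_gap_nonneg:
  assumes "0 \<le> y" "y \<le> 1"
  shows "0 \<le> selector_gap z y"
  using assms mult_left_mono[of y 1 z] mult_nonneg_nonneg[of "- z" y]
  by (auto simp: selector_gap_def max_def)

lemma selector_gap_eq_0_iff:
  assumes "0 \<le> y" "y \<le> 1"
  shows "selector_gap z y = 0 \<longleftrightarrow> y \<in> hsel z"
proof (cases z "0::real" rule: linorder_cases)
  case less
  then show ?thesis by (simp add: selector_gap_def hsel_def)
next
  case equal
  then show ?thesis using assms by (simp add: selector_gap_def hsel_def)
next
  case greater
  then have "selector_gap z y = z * (1 - y)"
    by (simp add: selector_gap_def algebra_simps)
  with greater show ?thesis by (simp add: hsel_def)
qed

lemma hsel_monotone: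
  assumes "h \<in> hsel z" "h' \<in> hsel z'"
  shows "0 \<le> (z - z') * (h - h')"
proof -
  have "(z - z') * (h - h') = selector_gap z h' + selector_gap z' h"
    using selector_gap_eq[OF assms(1), of h'] selector_gap_eq[OF assms(2), of h]
    by (simp add: algebra_simps)
  then show ?thesis
    using hsel_bounds[OF assms(1)] hsel_bounds[OF assms(2)]
    by (simp add: selector_gap_nonneg)
qed

lemma hsel_of_clamp:
  assumes "y = max 0 (min 1 (y + z))"
  shows "y \<in> hsel z"
  using assms by (auto simp: hsel_def min_def max_def split: if_splits)

lemma pos_diag_mult_vec:
  assumes "pos_diag M"
  shows "(M *v x) $ i = M $ i $ i * x $ i"
proof -
  have "(\<Sum>j\<in>UNIV. M $ i $ j * x $ j) = (\<Sum>j\<in>UNIV. if j = i then M $ i $ i * x $ i else 0)"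
    using assms by (intro sum.cong) (auto simp: pos_diag_def)
  then show ?thesis
    by (simp add: matrix_vector_mult_def)
qed

lemma Xset_eq_cbox:
  assumes "pos_diag D"
  shows "Xset D = cbox 0 (\<chi> i. 1 / D $ i $ i)"
proof -
  have "0 \<le> D $ i $ i * x \<and> D $ i $ i * x \<le> 1 \<longleftrightarrow> 0 \<le> x \<and> x \<le> 1 / D $ i $ i" for i x
  proof -
    have "D $ i $ i > 0" using assms by (simp add: pos_diag_def)
    then show ?thesis by (simp add: zero_le_mult_iff field_simps)
  qed
  then show ?thesis
    by (auto simp: Xset_def mem_box_cart pos_diag_mult_vec[OF assms])
qed

lemma lds_cert_quadratic_form:
  assumes "pos_diag Lam"
  shows "v \<bullet> ((transpose A ** Lam + Lam ** A) *v v) = 2 * (\<Sum>i\<in>UNIV. Lam $ i $ i * v $ i * (A *v v) $ i)"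
proof -
  have "(transpose A ** Lam + Lam ** A) *v v = transpose A *v (Lam *v v) + Lam *v (A *v v)"
    by (simp add: matrix_vector_mult_add_rdistrib matrix_vector_mul_assoc)
  then have "v \<bullet> ((transpose A ** Lam + Lam ** A) *v v) = v \<bullet> ((Lam *v v) v* A) + v \<bullet> (Lam *v (A *v v))"
    by (simp add: inner_add_right)
  also have "v \<bullet> ((Lam *v v) v* A) = (Lam *v v) \<bullet> (A *v v)"
    by (metis dot_lmul_matrix inner_commute)
  finally show ?thesis
    by (simp add: inner_vec_def pos_diag_mult_vec[OF assms] algebra_simps)
qed

lemma lds_cert_neg:
  assumes "lds_cert A Lam" "v \<noteq> 0"
  shows "(\<Sum>i\<in>UNIV. Lam $ i $ i * v $ i * (A *v v) $ i) < 0"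
  using assms lds_cert_quadratic_form[of Lam v A] by (auto simp: lds_cert_def neg_def_def)

lemma lds_cert_nonpos:
  assumes "lds_cert A Lam"
  shows "(\<Sum>i\<in>UNIV. Lam $ i $ i * v $ i * (A *v v) $ i) \<le> 0"
  using lds_cert_neg[OF assms, of v] by (cases "v = 0") auto

lemma is_equilibrium_iff:
  "is_equilibrium D A u x \<longleftrightarrow> x \<in> Xset D \<and> (\<forall>i. (D *v x) $ i \<in> hsel ((A *v x + u) $ i))"
proof -
  have "0 \<in> Finc D A u x \<longleftrightarrow> D *v x \<in> Hsel (A *v x + u)"
    by (auto simp: Finc_def eq_neg_iff_add_eq_0[symmetric])
  then show ?thesis
    by (simp add: is_equilibrium_def Hsel_def)
qed

lemma equilibrium_unique:
  assumes D: "pos_diag D" and C: "lds_cert A Lam"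
    and "is_equilibrium D A u x1" "is_equilibrium D A u x2"
  shows "x1 = x2"
proof (rule ccontr)
  assume "x1 \<noteq> x2"
  define v where "v = x1 - x2"
  have d: "D $ i $ i > 0" for i
    using D by (simp add: pos_diag_def)
  have "0 \<le> Lam $ i $ i * v $ i * (A *v v) $ i" for i
  proof -
    have "0 \<le> ((A *v x1 + u) $ i - (A *v x2 + u) $ i) * ((D *v x1) $ i - (D *v x2) $ i)"
      using assms(3,4) by (intro hsel_monotone) (auto simp: is_equilibrium_iff)
    also have "\<dots> = D $ i $ i * ((A *v v) $ i * v $ i)"
      by (simp add: v_def pos_diag_mult_vec[OF D] matrix_vector_mult_diff_distrib algebra_simps)
    finally have "0 \<le> (A *v v) $ i * v $ i"
      using d[of i] by (simp add: zero_le_mult_iff)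
    moreover have "Lam $ i $ i > 0"
      using C by (simp add: lds_cert_def pos_diag_def)
    ultimately have "0 \<le> Lam $ i $ i * ((A *v v) $ i * v $ i)"
      by simp
    then show ?thesis
      by (simp add: algebra_simps)
  qed
  then have "0 \<le> (\<Sum>i\<in>UNIV. Lam $ i $ i * v $ i * (A *v v) $ i)"
    by (simp add: sum_nonneg)
  moreover have "v \<noteq> 0"
    using \<open>x1 \<noteq> x2\<close> by (simp add: v_def)
  ultimately show False
    using lds_cert_neg[OF C] by fastforce
qed

lemma equilibrium_exists:
  assumes D: "pos_diag D"
  shows "\<exists>x. is_equilibrium D A u x"
proof -
  \<comment> \<open>A fixed point of \<open>f\<close> satisfies \<open>Dx = clamp (Dx + Ax + u)\<close>, which forces \<open>Dx \<in> H (Ax + u)\<close>.\<close>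
  define f where "f x = (\<chi> i. max 0 (min 1 ((D *v x) $ i + (A *v x + u) $ i)) / D $ i $ i)" for x
  have d: "D $ i $ i > 0" for i
    using D by (simp add: pos_diag_def)
  have "0 \<le> c / D $ i $ i" "c / D $ i $ i \<le> 1 / D $ i $ i" if "0 \<le> c" "c \<le> 1" for c i
    using d[of i] that by (simp_all add: divide_right_mono)
  then have "f \<in> Xset D \<rightarrow> Xset D"
    by (auto simp: Xset_eq_cbox[OF D] mem_box_cart f_def)
  moreover have "continuous_on (Xset D) f"
    unfolding f_def using d
    by (intro continuous_intros linear_continuous_on bounded_linear_compose[OF bounded_linear_vec_nth]
        matrix_vector_mul_bounded_linear) (auto simp: less_imp_neq[symmetric])
  moreover have "0 \<in> Xset D"
    by (simp add: Xset_def)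
  moreover have "compact (Xset D)" "convex (Xset D)"
    by (simp_all add: Xset_eq_cbox[OF D] compact_cbox convex_box)
  ultimately obtain x where "x \<in> Xset D" "f x = x"
    using brouwer[of "Xset D" f] by blast
  moreover have "(D *v x) $ i \<in> hsel ((A *v x + u) $ i)" for i
  proof (rule hsel_of_clamp)
    have "(D *v x) $ i = D $ i $ i * f x $ i"
      using \<open>f x = x\<close> by (simp add: pos_diag_mult_vec[OF D])
    then show "(D *v x) $ i = max 0 (min 1 ((D *v x) $ i + (A *v x + u) $ i))"
      using d[of i] by (simp add: f_def)
  qed
  ultimately show ?thesis
    by (auto simp: is_equilibrium_iff)
qed

section \<open>The Lyapunov function\<close>

lemma finite_vec_components:
  assumes "finite S"
  shows "finite {v :: 'a^'n. \<forall>i. v $ i \<in> S}"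
proof -
  have "{v :: 'a^'n. \<forall>i. v $ i \<in> S} \<subseteq> vec_lambda ` PiE UNIV (\<lambda>_. S)"
  proof
    fix v :: "'a^'n" assume "v \<in> {v. \<forall>i. v $ i \<in> S}"
    then have "vec_nth v \<in> PiE UNIV (\<lambda>_. S)"
      by (auto simp: PiE_UNIV_domain)
    then show "v \<in> vec_lambda ` PiE UNIV (\<lambda>_. S)"
      by (metis image_eqI vec_nth_inverse)
  qed
  then show ?thesis
    by (rule finite_subset) (simp add: finite_PiE assms)
qed

definition V_sum :: "real^'n^'n \<Rightarrow> real^'n^'n \<Rightarrow> real^'n \<Rightarrow> real^'n^'n \<Rightarrow> real^'n \<Rightarrow> real" where
  "V_sum D A u Lam x = (\<Sum>i\<in>UNIV. Lam $ i $ i * selector_gap ((A *v x + u) $ i) ((D *v x) $ i))"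

lemma V_inf_eq_V_sum:
  fixes x :: "real^'n"
  assumes Lam: "pos_diag Lam"
  shows "V_inf D A u Lam x = V_sum D A u Lam x"
proof -
  define z where "z = A *v x + u"
  define Z where "Z = {\<zeta>::real^'n. \<forall>i. \<zeta> $ i \<in> {0, 1}}"
  define val where "val \<zeta> = z \<bullet> (Lam *v (\<zeta> - D *v x))" for \<zeta>
  have "finite Z"
    unfolding Z_def by (rule finite_vec_components) simp
  have val: "val \<zeta> = (\<Sum>i\<in>UNIV. Lam $ i $ i * (z $ i * \<zeta> $ i - z $ i * (D *v x) $ i))" for \<zeta>
    unfolding val_def inner_vec_def by (rule sum.cong) (simp_all add: pos_diag_mult_vec[OF Lam] algebra_simps)
  have "Max (val ` Z) = V_sum D A u Lam x"
  proof (rule Max_eqI)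
    show "finite (val ` Z)"
      using \<open>finite Z\<close> by simp
  next
    fix r assume "r \<in> val ` Z"
    then obtain \<zeta> where "\<zeta> \<in> Z" "r = val \<zeta>" by blast
    have "z $ i * \<zeta> $ i \<le> max (z $ i) 0" for i
    proof -
      have "\<zeta> $ i = 0 \<or> \<zeta> $ i = 1"
        using \<open>\<zeta> \<in> Z\<close> by (simp add: Z_def)
      then show ?thesis by auto
    qed
    then show "r \<le> V_sum D A u Lam x"
      unfolding \<open>r = val \<zeta>\<close> val V_sum_def selector_gap_def z_def[symmetric]
      using Lam by (intro sum_mono mult_left_mono) (auto simp: pos_diag_def less_imp_le)
  next
    define \<zeta> where "\<zeta> = (\<chi> i. if z $ i > 0 then 1 else (0::real))"
    have "\<zeta> \<in> Z" "val \<zeta> = V_sum D A u Lam x"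
      unfolding val V_sum_def selector_gap_def z_def[symmetric]
      by (auto simp: Z_def \<zeta>_def max_def intro!: sum.cong)
    then show "V_sum D A u Lam x \<in> val ` Z"
      by (metis image_eqI)
  qed
  then show ?thesis
    by (simp add: V_inf_def Z_def val_def z_def)
qed

lemma V_sum_nonneg:
  assumes "pos_diag Lam" "x \<in> Xset D"
  shows "0 \<le> V_sum D A u Lam x"
  unfolding V_sum_def
  using assms by (intro sum_nonneg mult_nonneg_nonneg selector_gap_nonneg)
    (auto simp: pos_diag_def Xset_def less_imp_le)

lemma V_sum_eq_0_iff:
  assumes Lam: "pos_diag Lam" and x: "x \<in> Xset D"
  shows "V_sum D A u Lam x = 0 \<longleftrightarrow> is_equilibrium D A u x"
proof -
  have y: "0 \<le> (D *v x) $ i" "(D *v x) $ i \<le> 1" for i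
    using x by (auto simp: Xset_def)
  have "V_sum D A u Lam x = 0 \<longleftrightarrow>
      (\<forall>i. Lam $ i $ i * selector_gap ((A *v x + u) $ i) ((D *v x) $ i) = 0)"
    unfolding V_sum_def using Lam y
    by (subst sum_nonneg_eq_0_iff) (auto simp: pos_diag_def less_imp_le selector_gap_nonneg)
  also have "\<dots> \<longleftrightarrow> (\<forall>i. (D *v x) $ i \<in> hsel ((A *v x + u) $ i))"
    using Lam y by (simp add: pos_diag_def selector_gap_eq_0_iff less_imp_neq[symmetric])
  finally show ?thesis
    using x by (simp add: is_equilibrium_iff)
qed

lemma lipschitz_on_mult_bounded:
  fixes f g :: "'a::metric_space \<Rightarrow> 'b::real_normed_algebra"
  assumes f: "L-lipschitz_on S f" and g: "M-lipschitz_on S g"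
    and "bounded (f ` S)" "bounded (g ` S)"
  shows "\<exists>K. K-lipschitz_on S (\<lambda>x. f x * g x)"
proof -
  obtain B C where "B > 0" "C > 0" and B: "\<And>x. x \<in> S \<Longrightarrow> norm (f x) \<le> B"
    and C: "\<And>x. x \<in> S \<Longrightarrow> norm (g x) \<le> C"
    using assms(3,4) unfolding bounded_pos by (meson imageI)
  have "(B * M + C * L)-lipschitz_on S (\<lambda>x. f x * g x)"
  proof (rule lipschitz_onI)
    fix x y assume "x \<in> S" "y \<in> S"
    have "f x * g x - f y * g y = f x * (g x - g y) + (f x - f y) * g y"
      by (simp add: algebra_simps)
    then have "norm (f x * g x - f y * g y) \<le> norm (f x) * norm (g x - g y) + norm (f x - f y) * norm (g y)"
      by (metis norm_mult_ineq norm_triangle_le add_mono)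
    also have "\<dots> \<le> B * (M * dist x y) + (L * dist x y) * C"
      using B[OF \<open>x \<in> S\<close>] C[OF \<open>y \<in> S\<close>] \<open>B > 0\<close> \<open>C > 0\<close> lipschitz_on_nonneg[OF f]
        lipschitz_onD[OF f \<open>x \<in> S\<close> \<open>y \<in> S\<close>] lipschitz_onD[OF g \<open>x \<in> S\<close> \<open>y \<in> S\<close>]
      by (intro add_mono mult_mono) (auto simp: dist_norm)
    finally show "dist (f x * g x) (f y * g y) \<le> (B * M + C * L) * dist x y"
      by (simp add: dist_norm algebra_simps)
  qed (use \<open>B > 0\<close> \<open>C > 0\<close> lipschitz_on_nonneg[OF f] lipschitz_on_nonneg[OF g] in simp)
  then show ?thesis ..
qed

lemma lipschitz_on_sum:
  fixes f :: "'i \<Rightarrow> 'a::metric_space \<Rightarrow> 'b::real_normed_vector"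
  assumes "finite I" "\<And>i. i \<in> I \<Longrightarrow> \<exists>L. L-lipschitz_on S (f i)"
  shows "\<exists>L. L-lipschitz_on S (\<lambda>x. \<Sum>i\<in>I. f i x)"
  using assms
proof (induction I rule: finite_induct)
  case empty
  show ?case
    using lipschitz_on_constant by auto
next
  case (insert j I)
  then obtain L M where "L-lipschitz_on S (f j)" "M-lipschitz_on S (\<lambda>x. \<Sum>i\<in>I. f i x)"
    by blast
  then have "(L + M)-lipschitz_on S (\<lambda>x. f j x + (\<Sum>i\<in>I. f i x))"
    by (rule lipschitz_on_add)
  then show ?case
    using insert.hyps by auto
qed

lemma lipschitz_on_max_zero: "1-lipschitz_on S (\<lambda>z::real. max z 0)"
  by (rule lipschitz_onI) (auto simp: dist_real_def max_def)

lemma lipschitz_on_matrix_affine_component: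
  "\<exists>L. L-lipschitz_on S (\<lambda>x::real^'n. (M *v x + c) $ i)"
proof -
  have "bounded_linear (\<lambda>x::real^'n. (M *v x) $ i)"
    by (rule bounded_linear_compose[OF bounded_linear_vec_nth matrix_vector_mul_bounded_linear])
  then obtain L where "L-lipschitz_on S (\<lambda>x::real^'n. (M *v x) $ i)"
    by (rule bounded_linear.lipschitz_boundE)
  then have "(L + 0)-lipschitz_on S (\<lambda>x::real^'n. (M *v x) $ i + c $ i)"
    by (intro lipschitz_on_add lipschitz_on_constant)
  then show ?thesis
    by auto
qed

lemma continuous_on_matrix_affine_component:
  "continuous_on S (\<lambda>x::real^'n. (M *v x + c) $ i)"
  using lipschitz_on_matrix_affine_component lipschitz_on_continuous_on by blast

lemma continuous_on_V_sum: "continuous_on S (V_sum D A u Lam)"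
  unfolding V_sum_def[abs_def] selector_gap_def
  by (intro continuous_intros continuous_on_matrix_affine_component)

lemma lipschitz_on_V_sum:
  fixes S :: "(real^'n) set"
  assumes "compact S"
  shows "\<exists>K. K-lipschitz_on S (V_sum D A u Lam)"
proof -
  have bounded: "bounded ((\<lambda>x. (M *v x + c) $ i) ` S)" for M :: "real^'n^'n" and c i
    by (intro compact_imp_bounded compact_continuous_image continuous_on_matrix_affine_component assms)
  have "\<exists>K. K-lipschitz_on S (\<lambda>x. Lam $ i $ i * selector_gap ((A *v x + u) $ i) ((D *v x + 0) $ i))" for i
  proof -
    obtain Lz Ly where z: "Lz-lipschitz_on S (\<lambda>x. (A *v x + u) $ i)"
      and y: "Ly-lipschitz_on S (\<lambda>x. (D *v x + 0) $ i)"
      using lipschitz_on_matrix_affine_component by metis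
    have "(1 * Lz)-lipschitz_on S (\<lambda>x. max ((A *v x + u) $ i) 0)"
      by (rule lipschitz_on_compose2[OF z lipschitz_on_max_zero])
    moreover obtain Lp where "Lp-lipschitz_on S (\<lambda>x. (A *v x + u) $ i * (D *v x + 0) $ i)"
      using lipschitz_on_mult_bounded[OF z y bounded bounded] by blast
    ultimately have "(1 * Lz + Lp)-lipschitz_on S
        (\<lambda>x. max ((A *v x + u) $ i) 0 - (A *v x + u) $ i * (D *v x + 0) $ i)"
      by (rule lipschitz_on_diff)
    then show ?thesis
      unfolding selector_gap_def using lipschitz_on_cmult_real by blast
  qed
  then show ?thesis
    unfolding V_sum_def[abs_def] by (simp add: lipschitz_on_sum)
qed

section \<open>Exponential decay along solutions\<close>

lemma countable_nondegenerate_zeros: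
  fixes w :: "real \<Rightarrow> real"
  shows "countable {t. w t = 0 \<and> (\<exists>w'. (w has_real_derivative w') (at t) \<and> w' \<noteq> 0)}"
    (is "countable ?Z")
proof -
  have "\<not> t islimpt ?Z" if "t \<in> ?Z" for t
  proof -
    from that obtain w' where "w t = 0" "(w has_real_derivative w') (at t)" "w' \<noteq> 0"
      by blast
    then have "((\<lambda>s. w s / (s - t)) \<longlongrightarrow> w') (at t)"
      by (simp add: has_field_derivative_iff)
    then have "eventually (\<lambda>s. w s / (s - t) \<noteq> 0) (at t)"
      using \<open>w' \<noteq> 0\<close> by (rule tendsto_imp_eventually_ne)
    then have "eventually (\<lambda>s. s \<notin> ?Z) (at t)"
      by eventually_elim auto
    then show ?thesis
      by (simp add: islimpt_iff_eventually)
  qed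
  moreover have "open {y. \<not> y islimpt ?Z}"
    by (simp add: closed_limpts open_Collect_neg)
  ultimately have "countable ({y. \<not> y islimpt ?Z} \<inter> ?Z)"
    by (intro sparse_imp_countable) (auto simp: sparse_in_open)
  moreover have "{y. \<not> y islimpt ?Z} \<inter> ?Z = ?Z"
    using \<open>\<And>t. t \<in> ?Z \<Longrightarrow> \<not> t islimpt ?Z\<close> by blast
  ultimately show ?thesis
    by simp
qed

lemma has_real_derivative_max_zero:
  fixes w :: "real \<Rightarrow> real"
  assumes w: "(w has_real_derivative w') (at t)" and degenerate: "w t = 0 \<Longrightarrow> w' = 0"
  shows "((\<lambda>s. max (w s) 0) has_real_derivative (if w t > 0 then w' else 0)) (at t)"
proof -
  have lim: "(w \<longlongrightarrow> w t) (at t)"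
    using DERIV_isCont[OF w] isCont_def by blast
  consider "w t > 0" | "w t < 0" | "w t = 0" by linarith
  then show ?thesis
  proof cases
    case 1
    then have "eventually (\<lambda>s. max (w s) 0 = w s) (nhds t)"
      using order_tendstoD(1)[OF lim 1] unfolding eventually_at_filter
      by (auto elim!: eventually_mono)
    from DERIV_cong_ev[OF refl this refl] show ?thesis
      using w 1 by simp
  next
    case 2
    then have "eventually (\<lambda>s. max (w s) 0 = 0) (nhds t)"
      using order_tendstoD(2)[OF lim 2] unfolding eventually_at_filter
      by (auto elim!: eventually_mono)
    from DERIV_cong_ev[OF refl this refl] show ?thesis
      using 2 by simp
  next
    case 3
    have "((\<lambda>s. max (w s) 0) has_real_derivative 0) (at t)"
      unfolding has_field_derivative_iff
    proof (rule Lim_null_comparison)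
      show "((\<lambda>s. \<bar>(w s - w t) / (s - t)\<bar>) \<longlongrightarrow> 0) (at t)"
        using w degenerate[OF 3] by (intro tendsto_rabs_zero) (simp add: has_field_derivative_iff)
      show "\<forall>\<^sub>F s in at t. norm ((max (w s) 0 - max (w t) 0) / (s - t)) \<le> \<bar>(w s - w t) / (s - t)\<bar>"
        using 3 by (intro always_eventually allI) (simp add: abs_divide divide_right_mono)
    qed
    then show ?thesis
      using 3 by simp
  qed
qed

lemma has_real_derivative_selector_gap:
  assumes w: "(w has_real_derivative w') (at t)" and y: "(y has_real_derivative y') (at t)"
    and h: "h \<in> hsel (w t)" and degenerate: "w t = 0 \<Longrightarrow> w' = 0"
  shows "((\<lambda>s. selector_gap (w s) (y s)) has_real_derivative w' * (h - y t) - w t * y') (at t)"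
proof -
  have "(if w t > 0 then w' else 0) = w' * h"
    using h degenerate by (cases "w t" "0::real" rule: linorder_cases) (auto simp: hsel_def)
  then have "((\<lambda>s. max (w s) 0) has_real_derivative w' * h) (at t)"
    using has_real_derivative_max_zero[OF w degenerate] by simp
  from DERIV_diff[OF this DERIV_mult[OF w y]] show ?thesis
    by (simp add: selector_gap_def algebra_simps)
qed

lemma has_real_derivative_matrix_affine_component:
  fixes x :: "real \<Rightarrow> real^'n"
  assumes "(x has_vector_derivative v) (at t)"
  shows "((\<lambda>s. (M *v x s + c) $ i) has_real_derivative (M *v v) $ i) (at t)"
proof -
  have "bounded_linear (\<lambda>w::real^'n. (M *v w) $ i)"
    by (rule bounded_linear_compose[OF bounded_linear_vec_nth matrix_vector_mul_bounded_linear])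
  from bounded_linear.has_vector_derivative[OF this assms]
  have "((\<lambda>s. (M *v x s) $ i) has_real_derivative (M *v v) $ i) (at t)"
    by (simp add: has_real_derivative_iff_has_vector_derivative)
  then show ?thesis
    using DERIV_add[OF _ DERIV_const] by fastforce
qed

lemma V_sum_has_real_derivative:
  fixes x :: "real \<Rightarrow> real^'n"
  assumes D: "pos_diag D" and x': "(x has_vector_derivative v) (at t)" and v: "v \<in> Finc D A u (x t)"
    and sliding: "\<And>i. (A *v x t + u) $ i = 0 \<Longrightarrow> (A *v v) $ i = 0"
  shows "((\<lambda>s. V_sum D A u Lam (x s)) has_real_derivative
      (\<Sum>i\<in>UNIV. Lam $ i $ i * (v $ i * (A *v v) $ i
        - D $ i $ i * selector_gap ((A *v x t + u) $ i) ((D *v x t) $ i)))) (at t)"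
proof -
  obtain h where vh: "v = - (D *v x t) + h" and h: "h \<in> Hsel (A *v x t + u)"
    using v by (auto simp: Finc_def)
  have "((\<lambda>s. Lam $ i $ i * selector_gap ((A *v x s + u) $ i) ((D *v x s + 0) $ i)) has_real_derivative
      Lam $ i $ i * ((A *v v) $ i * (h $ i - (D *v x t + 0) $ i) - (A *v x t + u) $ i * (D *v v) $ i)) (at t)"
    for i
    using h sliding
    by (intro DERIV_cmult has_real_derivative_selector_gap has_real_derivative_matrix_affine_component x')
      (auto simp: Hsel_def)
  moreover have "(A *v v) $ i * (h $ i - (D *v x t) $ i) - (A *v x t + u) $ i * (D *v v) $ i
      = v $ i * (A *v v) $ i - D $ i $ i * selector_gap ((A *v x t + u) $ i) ((D *v x t) $ i)" for i
  proof -
    have "h $ i - (D *v x t) $ i = v $ i"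
      using vh by simp
    moreover have "selector_gap ((A *v x t + u) $ i) ((D *v x t) $ i) = (A *v x t + u) $ i * v $ i"
      using h vh by (simp add: Hsel_def selector_gap_eq)
    ultimately show ?thesis
      by (simp add: pos_diag_mult_vec[OF D] algebra_simps)
  qed
  ultimately show ?thesis
    unfolding V_sum_def by (auto intro!: DERIV_sum)
qed

lemma V_sum_derivative_bound:
  assumes C: "lds_cert A Lam" and x: "x \<in> Xset D" and dm: "\<And>i. dm \<le> D $ i $ i"
  shows "(\<Sum>i\<in>UNIV. Lam $ i $ i * (v $ i * (A *v v) $ i
      - D $ i $ i * selector_gap ((A *v x + u) $ i) ((D *v x) $ i))) \<le> - dm * V_sum D A u Lam x"
proof -
  let ?gap = "\<lambda>i. selector_gap ((A *v x + u) $ i) ((D *v x) $ i)"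
  have Lam: "0 < Lam $ i $ i" for i
    using C by (simp add: lds_cert_def pos_diag_def)
  have "0 \<le> ?gap i" for i
    using x by (intro selector_gap_nonneg) (auto simp: Xset_def)
  then have "(\<Sum>i\<in>UNIV. Lam $ i $ i * dm * ?gap i) \<le> (\<Sum>i\<in>UNIV. Lam $ i $ i * D $ i $ i * ?gap i)"
    using Lam dm by (intro sum_mono mult_right_mono mult_left_mono) (auto simp: less_imp_le)
  moreover have "(\<Sum>i\<in>UNIV. Lam $ i $ i * v $ i * (A *v v) $ i) \<le> 0"
    by (rule lds_cert_nonpos[OF C])
  ultimately have "(\<Sum>i\<in>UNIV. Lam $ i $ i * v $ i * (A *v v) $ i) - (\<Sum>i\<in>UNIV. Lam $ i $ i * D $ i $ i * ?gap i)
      \<le> 0 - (\<Sum>i\<in>UNIV. Lam $ i $ i * dm * ?gap i)"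
    by linarith
  then show ?thesis
    by (simp add: V_sum_def sum_subtractf[symmetric] sum_distrib_left right_diff_distrib
        sum_negf[symmetric] mult.assoc mult.left_commute)
qed

lemma is_solution_ae_sliding:
  fixes x :: "real \<Rightarrow> real^'n"
  assumes "is_solution D A u x"
  shows "\<exists>E. negligible E \<and> (\<forall>t. 0 < t \<longrightarrow> t \<notin> E \<longrightarrow>
    (\<exists>v. (x has_vector_derivative v) (at t) \<and> v \<in> Finc D A u (x t) \<and>
       (\<forall>i. (A *v x t + u) $ i = 0 \<longrightarrow> (A *v v) $ i = 0)))"
proof -
  have "AE t in lborel. 0 < t \<longrightarrow> (\<exists>v. (x has_vector_derivative v) (at t) \<and> v \<in> Finc D A u (x t))"
    using assms by (simp add: is_solution_def)
  then obtain N where N: "{t \<in> space lborel. \<not> (0 < t \<longrightarrow>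
      (\<exists>v. (x has_vector_derivative v) (at t) \<and> v \<in> Finc D A u (x t)))} \<subseteq> N"
    "emeasure lborel N = 0" "N \<in> sets lborel"
    by (rule AE_E)
  define Z where "Z i = {t. (A *v x t + u) $ i = 0 \<and>
      (\<exists>w'. ((\<lambda>s. (A *v x s + u) $ i) has_real_derivative w') (at t) \<and> w' \<noteq> 0)}" for i
  have "countable (\<Union>i. Z i)"
    unfolding Z_def by (intro countable_UN countable_nondegenerate_zeros) auto
  then have "(\<Union>i. Z i) \<in> null_sets lborel"
    by (rule countable_imp_null_set_lborel)
  moreover have "N \<in> null_sets lborel"
    using N(2,3) by (simp add: null_sets_def)
  ultimately have "N \<union> (\<Union>i. Z i) \<in> null_sets lborel"
    by (simp add: null_sets.Un)
  then have "negligible (N \<union> (\<Union>i. Z i))"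
    by (simp add: negligible_iff_null_sets null_sets_completionI)
  moreover have "\<exists>v. (x has_vector_derivative v) (at t) \<and> v \<in> Finc D A u (x t) \<and>
      (\<forall>i. (A *v x t + u) $ i = 0 \<longrightarrow> (A *v v) $ i = 0)" if t: "0 < t" "t \<notin> N \<union> (\<Union>i. Z i)" for t
  proof -
    obtain v where v: "(x has_vector_derivative v) (at t)" "v \<in> Finc D A u (x t)"
      using N(1) t by auto
    have "(A *v v) $ i = 0" if "(A *v x t + u) $ i = 0" for i
    proof (rule ccontr)
      assume "(A *v v) $ i \<noteq> 0"
      with that have "t \<in> Z i"
        unfolding Z_def using has_real_derivative_matrix_affine_component[OF v(1)] by blast
      with t show False
        by blast
    qed
    with v show ?thesis
      by blast
  qed
  ultimately show ?thesis
    by blast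
qed

lemma V_sum_decay:
  fixes x :: "real \<Rightarrow> real^'n"
  assumes D: "pos_diag D" and C: "lds_cert A Lam" and sol: "is_solution D A u x"
    and "0 \<le> s1" "s1 \<le> s2" and dm: "\<And>i. dm \<le> D $ i $ i"
  shows "V_sum D A u Lam (x s2) \<le> exp (- dm * (s2 - s1)) * V_sum D A u Lam (x s1)"
proof -
  have X: "x t \<in> Xset D" if "0 \<le> t" for t
    using sol that by (simp add: is_solution_def)
  have "compact (Xset D)"
    by (simp add: Xset_eq_cbox[OF D] compact_cbox)
  obtain K where lip: "K-lipschitz_on (Xset D) (V_sum D A u Lam)"
    by (rule exE[OF lipschitz_on_V_sum[OF \<open>compact (Xset D)\<close>]])
  have "abs_cont_on 0 s2 x"
    using sol \<open>0 \<le> s1\<close> \<open>s1 \<le> s2\<close> by (simp add: is_solution_def)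
  then have "abs_cont_on s1 s2 x"
    using \<open>0 \<le> s1\<close> by (rule abs_cont_on_subinterval) simp
  moreover have "x ` {s1..s2} \<subseteq> Xset D"
    using X \<open>0 \<le> s1\<close> by auto
  ultimately have "abs_cont_on s1 s2 (\<lambda>t. V_sum D A u Lam (x t))"
    using abs_cont_on_compose_lipschitz[OF _ lip] by blast
  moreover obtain E where "negligible E" and sliding: "\<forall>t. 0 < t \<longrightarrow> t \<notin> E \<longrightarrow>
      (\<exists>v. (x has_vector_derivative v) (at t) \<and> v \<in> Finc D A u (x t) \<and>
        (\<forall>i. (A *v x t + u) $ i = 0 \<longrightarrow> (A *v v) $ i = 0))"
    using is_solution_ae_sliding[OF sol] by blast
  then have "negligible (insert 0 E)"
    by simp
  ultimately show ?thesis
  proof (rule abs_cont_on_exp_decay[OF \<open>s1 \<le> s2\<close>])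
    fix t assume "t \<in> {s1..s2} - insert 0 E"
    then have "0 < t" "t \<notin> E"
      using \<open>0 \<le> s1\<close> by auto
    then obtain v where v: "(x has_vector_derivative v) (at t)" "v \<in> Finc D A u (x t)"
      and "\<forall>i. (A *v x t + u) $ i = 0 \<longrightarrow> (A *v v) $ i = 0"
      using sliding by blast
    then have "((\<lambda>t. V_sum D A u Lam (x t)) has_real_derivative
        (\<Sum>i\<in>UNIV. Lam $ i $ i * (v $ i * (A *v v) $ i
          - D $ i $ i * selector_gap ((A *v x t + u) $ i) ((D *v x t) $ i)))) (at t)"
      by (intro V_sum_has_real_derivative[OF D v]) blast
    moreover have "(\<Sum>i\<in>UNIV. Lam $ i $ i * (v $ i * (A *v v) $ i
        - D $ i $ i * selector_gap ((A *v x t + u) $ i) ((D *v x t) $ i))) \<le> - dm * V_sum D A u Lam (x t)"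
      using \<open>0 < t\<close> by (intro V_sum_derivative_bound[OF C X dm]) simp
    ultimately show "\<exists>V'. ((\<lambda>t. V_sum D A u Lam (x t)) has_real_derivative V') (at t) \<and>
        V' \<le> - dm * V_sum D A u Lam (x t)"
      by blast
  qed
qed

section \<open>Stability\<close>

lemma compact_small_values_near_unique_zero:
  fixes V :: "'a::metric_space \<Rightarrow> real"
  assumes "compact K" "continuous_on K V" "\<And>y. y \<in> K \<Longrightarrow> 0 \<le> V y"
    and zero: "\<And>y. y \<in> K \<Longrightarrow> V y = 0 \<longleftrightarrow> y = z" and "\<epsilon> > 0"
  shows "\<exists>\<eta>>0. \<forall>y\<in>K. V y < \<eta> \<longrightarrow> dist y z < \<epsilon>"
proof -
  define S where "S = K \<inter> {y. \<epsilon> \<le> dist y z}"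
  have "compact S"
    unfolding S_def using \<open>compact K\<close> by (intro compact_Int_closed closed_Collect_le continuous_intros)
  show ?thesis
  proof (cases "S = {}")
    case True
    then show ?thesis
      by (intro exI[of _ 1]) (auto simp: S_def not_le)
  next
    case False
    then obtain y0 where "y0 \<in> S" and min: "\<And>y. y \<in> S \<Longrightarrow> V y0 \<le> V y"
      using continuous_attains_inf[OF \<open>compact S\<close> False] continuous_on_subset[OF assms(2)]
      by (metis Int_lower1 S_def)
    then have "V y0 > 0"
      using zero[of y0] assms(3)[of y0] \<open>\<epsilon> > 0\<close> by (force simp: S_def)
    moreover have "\<forall>y\<in>K. V y < V y0 \<longrightarrow> dist y z < \<epsilon>"
      using min by (force simp: S_def)
    ultimately show ?thesis
      by blast
  qed
qed

lemma tendsto_if_exp_decay: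
  fixes V :: "'a::metric_space \<Rightarrow> real"
  assumes "compact K" "continuous_on K V" "\<And>y. y \<in> K \<Longrightarrow> 0 \<le> V y"
    and "\<And>y. y \<in> K \<Longrightarrow> V y = 0 \<longleftrightarrow> y = z" "c > 0"
    and K: "\<And>t. 0 \<le> t \<Longrightarrow> x t \<in> K" and decay: "\<And>t. 0 \<le> t \<Longrightarrow> V (x t) \<le> exp (- c * t) * V (x 0)"
  shows "(x \<longlongrightarrow> z) at_top"
proof (rule tendstoI)
  fix \<epsilon> :: real assume "\<epsilon> > 0"
  then obtain \<eta> where "\<eta> > 0" and \<eta>: "\<forall>y\<in>K. V y < \<eta> \<longrightarrow> dist y z < \<epsilon>"
    using compact_small_values_near_unique_zero[OF assms(1-4)] by blast
  have "((\<lambda>t. exp (- c * t) * V (x 0)) \<longlongrightarrow> 0 * V (x 0)) at_top"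
    using \<open>c > 0\<close> by (intro tendsto_intros filterlim_compose[OF exp_at_bot]
        filterlim_tendsto_neg_mult_at_bot[OF tendsto_const _ filterlim_ident]) auto
  then have "eventually (\<lambda>t. exp (- c * t) * V (x 0) < \<eta>) at_top"
    using \<open>\<eta> > 0\<close> by (simp add: order_tendstoD(2))
  then show "eventually (\<lambda>t. dist (x t) z < \<epsilon>) at_top"
    using eventually_ge_at_top[of 0]
    by eventually_elim (use \<eta> K decay in fastforce)
qed

lemma strongly_GAS_if_exp_decay:
  fixes V :: "real^'n \<Rightarrow> real"
  assumes "compact (Xset D)" "continuous_on (Xset D) V" "\<And>y. y \<in> Xset D \<Longrightarrow> 0 \<le> V y"
    and "\<And>y. y \<in> Xset D \<Longrightarrow> V y = 0 \<longleftrightarrow> y = xs" "xs \<in> Xset D" "c > 0"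
    and decay: "\<And>x t. is_solution D A u x \<Longrightarrow> 0 \<le> t \<Longrightarrow> V (x t) \<le> exp (- c * t) * V (x 0)"
  shows "strongly_GAS D A u xs"
proof -
  have X: "x t \<in> Xset D" if "is_solution D A u x" "0 \<le> t" for x t
    using that by (simp add: is_solution_def)
  have "\<exists>\<delta>>0. \<forall>x. is_solution D A u x \<longrightarrow> norm (x 0 - xs) < \<delta> \<longrightarrow> (\<forall>t\<ge>0. norm (x t - xs) < \<epsilon>)"
    if "\<epsilon> > 0" for \<epsilon>
  proof -
    obtain \<eta> where "\<eta> > 0" and \<eta>: "\<forall>y\<in>Xset D. V y < \<eta> \<longrightarrow> dist y xs < \<epsilon>"
      using compact_small_values_near_unique_zero[OF assms(1-4) \<open>\<epsilon> > 0\<close>] by blast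
    moreover have "V xs = 0"
      using assms(4,5) by blast
    ultimately obtain \<delta> where "\<delta> > 0" and \<delta>: "\<forall>y\<in>Xset D. dist y xs < \<delta> \<longrightarrow> V y < \<eta>"
      using assms(2,5) unfolding continuous_on_iff by (metis dist_real_def diff_zero abs_less_iff)
    have "norm (x t - xs) < \<epsilon>"
      if sol: "is_solution D A u x" and "norm (x 0 - xs) < \<delta>" "0 \<le> t" for x t
    proof -
      have "V (x 0) < \<eta>"
        using \<delta> X[OF sol] that(2) by (simp add: dist_norm)
      moreover have "exp (- c * t) * V (x 0) \<le> V (x 0)"
        using \<open>c > 0\<close> \<open>0 \<le> t\<close> assms(3)[OF X[OF sol order_refl]]
        by (intro mult_left_le_one_le) auto
      ultimately have "V (x t) < \<eta>"
        using decay[OF sol \<open>0 \<le> t\<close>] by linarith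
      then show ?thesis
        using \<eta> X[OF sol \<open>0 \<le> t\<close>] by (simp add: dist_norm)
    qed
    with \<open>\<delta> > 0\<close> show ?thesis
      by blast
  qed
  moreover have "(x \<longlongrightarrow> xs) at_top" if "is_solution D A u x" for x
    using X[OF that] decay[OF that] by (intro tendsto_if_exp_decay[OF assms(1-4,6)])
  ultimately show ?thesis
    unfolding strongly_GAS_def by blast
qed

lemma equilibrium_strongly_GAS:
  assumes D: "pos_diag D" and C: "lds_cert A Lam" and "0 < dm" and dm: "\<And>i. dm \<le> D $ i $ i"
    and xs: "is_equilibrium D A u xs"
  shows "strongly_GAS D A u xs"
proof (rule strongly_GAS_if_exp_decay)
  have Lam: "pos_diag Lam"
    using C by (simp add: lds_cert_def)
  show "compact (Xset D)"
    by (simp add: Xset_eq_cbox[OF D] compact_cbox)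
  show "xs \<in> Xset D"
    using xs by (simp add: is_equilibrium_def)
  show "V_sum D A u Lam y = 0 \<longleftrightarrow> y = xs" if "y \<in> Xset D" for y
    using V_sum_eq_0_iff[OF Lam that] equilibrium_unique[OF D C _ xs] xs by blast
  show "V_sum D A u Lam (x t) \<le> exp (- dm * t) * V_sum D A u Lam (x 0)"
    if "is_solution D A u x" "0 \<le> t" for x t
    using V_sum_decay[OF D C that(1) order_refl that(2) dm] by simp
  show "0 \<le> V_sum D A u Lam y" if "y \<in> Xset D" for y
    using V_sum_nonneg[OF Lam that] .
qed (use \<open>0 < dm\<close> continuous_on_V_sum in auto)

lemma pos_diag_Min_diag:
  assumes "pos_diag D"
  shows "0 < Min (range (\<lambda>i. D $ i $ i))" "Min (range (\<lambda>i. D $ i $ i)) \<le> D $ i $ i"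
proof -
  have "Min (range (\<lambda>i. D $ i $ i)) \<in> range (\<lambda>i. D $ i $ i)"
    by (rule Min_in) auto
  then show "0 < Min (range (\<lambda>i. D $ i $ i))"
    using assms by (auto simp: pos_diag_def)
  show "Min (range (\<lambda>i. D $ i $ i)) \<le> D $ i $ i"
    by (rule Min_le) auto
qed

theorem theorem2:
  fixes D W Lam :: "real^'n^'n" and u :: "real^'n"
  assumes "pos_diag D"
    and "lds_cert (W - D) Lam"
  shows "(\<exists>!xs. is_equilibrium D (W - D) u xs)
    \<and> (\<forall>xs. is_equilibrium D (W - D) u xs \<longrightarrow> strongly_GAS D (W - D) u xs)
    \<and> (\<forall>x. is_solution D (W - D) u x \<longrightarrow>
         (\<forall>s1 s2. 0 \<le> s1 \<longrightarrow> s1 \<le> s2 \<longrightarrow>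
            V_inf D (W - D) u Lam (x s2)
              \<le> exp (- (Min (range (\<lambda>i. D$i$i))) * (s2 - s1)) * V_inf D (W - D) u Lam (x s1)))"
proof -
  have Lam: "pos_diag Lam"
    using assms(2) by (simp add: lds_cert_def)
  note dm = pos_diag_Min_diag[OF assms(1)]
  have "\<exists>!xs. is_equilibrium D (W - D) u xs"
    using equilibrium_exists[OF assms(1)] equilibrium_unique[OF assms] by blast
  moreover have "strongly_GAS D (W - D) u xs" if "is_equilibrium D (W - D) u xs" for xs
    using equilibrium_strongly_GAS[OF assms dm that] .
  moreover have "V_inf D (W - D) u Lam (x s2)
      \<le> exp (- Min (range (\<lambda>i. D $ i $ i)) * (s2 - s1)) * V_inf D (W - D) u Lam (x s1)"
    if "is_solution D (W - D) u x" "0 \<le> s1" "s1 \<le> s2" for x s1 s2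
    unfolding V_inf_eq_V_sum[OF Lam] using V_sum_decay[OF assms(1,2) that dm(2)] .
  ultimately show ?thesis
    by blast
qed

end
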